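(* Let $\mathbb{B}$ be a separable Banach space with dual $\mathbb{B}^*$, $S_1^*(0)$ the unit sphere of $\mathbb{B}^*$, and $\mathcal K_{\mathbb B}$ the space of nonempty compact subsets of $\mathbb{B}$ with the Hausdorff distance. Let $(B_n)_{n\ge0}$ be a sequence of random convex elements of $\mathcal K_{\mathbb B}$ which is almost surely relatively compact in $\mathcal K_{\mathbb B}$. Suppose there is a deterministic function $\varphi:S_1^*(0)\to\mathbb{R}$ such that for every $\theta\in S_1^*(0)$, $\mathcal M_{B_n}(\theta)\to\varphi(\theta)$ almost surely as $n\to\infty$. Then $\varphi$ is the support function of some set $A\in\mathcal K_{\mathbb B}$ and $B_n\to A$ almost surely in $\mathcal K_{\mathbb B}$.
   Context: For $A\in\mathcal K_{\mathbb B}$, the support function is $\mathcal M_A(\theta)=\sup_{x\in A}\langle x,\theta\rangle$, $\theta\in S_1^*(0)$. Hausdorff distance: $\rho_{\mathbb B}(A,B)=\max\{\inf\{\epsilon:A\subset B^\epsilon\},\inf\{\epsilon:B\subset A^\epsilon\}\}$, $A^\epsilon$ the open $\epsilon$-neighbourhood. *)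

theory Defs
  imports "HOL-Analysis.Analysis" "HOL-Probability.Probability"
begin

definition KB :: "'a::metric_space set set" where
  "KB = {K. compact K \<and> K \<noteq> {}}"

definition nbhd :: "'a::metric_space set \<Rightarrow> real \<Rightarrow> 'a set" where
  "nbhd A \<epsilon> = {x. \<exists>y\<in>A. dist x y < \<epsilon>}"

definition hausdorff_distance :: "'a::metric_space set \<Rightarrow> 'a set \<Rightarrow> real" where
  "hausdorff_distance A B =
     max (Inf {\<epsilon>. \<epsilon> > 0 \<and> A \<subseteq> nbhd B \<epsilon>}) (Inf {\<epsilon>. \<epsilon> > 0 \<and> B \<subseteq> nbhd A \<epsilon>})"

text \<open>Borel sigma-algebra of K_B with the Hausdorff metric; since K_B is a
  separable metric space (B separable), it is generated by the open Hausdorff balls.\<close>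
definition KB_borel :: "'a::metric_space set measure" where
  "KB_borel = sigma KB
     {{K \<in> KB. hausdorff_distance K C < r} | C r. C \<in> KB}"

definition support_fun :: "'a::real_normed_vector set \<Rightarrow> ('a \<Rightarrow>\<^sub>L real) \<Rightarrow> real" where
  "support_fun A \<theta> = (SUP x\<in>A. blinfun_apply \<theta> x)"

definition rel_compact_KB :: "'a::metric_space set set \<Rightarrow> bool" where
  "rel_compact_KB S \<longleftrightarrow> S \<subseteq> KB \<and>
     (\<forall>s::nat \<Rightarrow> 'a set. (\<forall>n. s n \<in> S) \<longrightarrow>
        (\<exists>r K. strict_mono r \<and> K \<in> KB \<and>
              (\<lambda>k. hausdorff_distance (s (r k)) K) \<longlonglongrightarrow> 0))"

end

theory Submission
  imports Defs
begin

text \<open>A separable normed space has a countable family \<open>\<Theta>\<close> of unit functionals separating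
  every point from every compact convex set: separate the points of a countable dense set from
  the convex hulls of its finite subsets (Hahn--Banach). Almost surely, the support functions
  of \<open>B\<^sub>n\<close> converge on all of \<open>\<Theta>\<close> simultaneously. Each Hausdorff limit of a subsequence is then
  convex with support function \<open>\<phi>\<close> on \<open>\<Theta>\<close>, so all these limits coincide with one set \<open>A\<close>,
  and relative compactness forces \<open>B\<^sub>n \<rightarrow> A\<close>. Finally, support functions are 1-Lipschitz in
  the Hausdorff distance, so \<open>\<phi>\<close> is the support function of \<open>A\<close>.\<close>

section \<open>Hahn--Banach for sublinear functionals\<close>

definition sublinear :: "('a::real_vector \<Rightarrow> real) \<Rightarrow> bool" where
  "sublinear p \<longleftrightarrow> (\<forall>x y. p (x + y) \<le> p x + p y) \<and> (\<forall>c x. 0 < c \<longrightarrow> p (c *\<^sub>R x) \<le> c * p x)"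

lemma sublinearD:
  assumes "sublinear p"
  shows sublinear_add: "p (x + y) \<le> p x + p y"
    and sublinear_scaleR_le: "0 < c \<Longrightarrow> p (c *\<^sub>R x) \<le> c * p x"
  using assms unfolding sublinear_def by auto

lemma sublinear_zero:
  assumes "sublinear p"
  shows "p 0 = 0"
  using sublinear_scaleR_le[OF assms, of "1/2" 0] sublinear_scaleR_le[OF assms, of 2 0] by simp

lemma sublinear_scaleR:
  assumes "sublinear p" "0 < c"
  shows "p (c *\<^sub>R x) = c * p x"
proof -
  have "p x \<le> (1/c) * p (c *\<^sub>R x)"
    using sublinear_scaleR_le[OF assms(1), of "1/c" "c *\<^sub>R x"] assms(2) by simp
  then have "c * p x \<le> p (c *\<^sub>R x)"
    using assms(2) by (simp add: field_simps)
  with sublinear_scaleR_le[OF assms, of x] show ?thesis by linarith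
qed

text \<open>A linear functional on a subspace, dominated by \<open>p\<close>, encoded by its graph; a maximal
  one (Zorn) is defined everywhere.\<close>
definition dominated_graph :: "('a::real_vector \<Rightarrow> real) \<Rightarrow> ('a \<times> real) set \<Rightarrow> bool" where
  "dominated_graph p G \<longleftrightarrow> (0, 0) \<in> G \<and> (\<forall>x a. (x, a) \<in> G \<longrightarrow> a \<le> p x) \<and>
     (\<forall>x a y b c. (x, a) \<in> G \<longrightarrow> (y, b) \<in> G \<longrightarrow> (c *\<^sub>R x + y, c * a + b) \<in> G)"

lemma dominated_graphD:
  assumes "dominated_graph p G"
  shows dominated_graph_zero: "(0, 0) \<in> G"
    and dominated_graph_le: "(x, a) \<in> G \<Longrightarrow> a \<le> p x"
    and dominated_graph_lincomb: "(x, a) \<in> G \<Longrightarrow> (y, b) \<in> G \<Longrightarrow> (c *\<^sub>R x + y, c * a + b) \<in> G"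
  using assms unfolding dominated_graph_def by blast+

lemma dominated_graph_unique:
  assumes "sublinear p" "dominated_graph p G" "(x, a) \<in> G" "(x, b) \<in> G"
  shows "a = b"
proof -
  have "(0, b - a) \<in> G" "(0, a - b) \<in> G"
    using dominated_graph_lincomb[OF assms(2,3,4), of "-1"]
      dominated_graph_lincomb[OF assms(2,4,3), of "-1"] by simp_all
  then have "b - a \<le> 0" "a - b \<le> 0"
    using dominated_graph_le[OF assms(2)] sublinear_zero[OF assms(1)] by fastforce+
  then show ?thesis by linarith
qed

lemma dominated_graph_chain:
  assumes "sublinear p" "C \<in> chains (Collect (dominated_graph p))"
  shows "\<exists>U. dominated_graph p U \<and> (\<forall>X\<in>C. X \<subseteq> U)"
proof (cases "C = {}")
  case True
  have "dominated_graph p {(0, 0)}"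
    unfolding dominated_graph_def using sublinear_zero[OF assms(1)] by simp
  then show ?thesis using True by blast
next
  case False
  have graphs: "\<And>X. X \<in> C \<Longrightarrow> dominated_graph p X"
    and chain: "\<And>X Y. X \<in> C \<Longrightarrow> Y \<in> C \<Longrightarrow> X \<subseteq> Y \<or> Y \<subseteq> X"
    using assms(2) unfolding chains_def chain_subset_def by auto
  have "dominated_graph p (\<Union>C)"
    unfolding dominated_graph_def
  proof (intro conjI allI impI)
    show "(0, 0) \<in> \<Union>C" using False graphs dominated_graph_zero by blast
    show "a \<le> p x" if "(x, a) \<in> \<Union>C" for x a
      using that graphs dominated_graph_le by blast
    show "(c *\<^sub>R x + y, c * a + b) \<in> \<Union>C" if xy: "(x, a) \<in> \<Union>C" "(y, b) \<in> \<Union>C" for x a y b c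
    proof -
      obtain X Y where "X \<in> C" "(x, a) \<in> X" "Y \<in> C" "(y, b) \<in> Y" using xy by blast
      then show ?thesis
        using chain[of X Y] graphs dominated_graph_lincomb by blast
    qed
  qed
  then show ?thesis by blast
qed

lemma dominated_graph_extend:
  assumes p: "sublinear p" and G: "dominated_graph p G"
    and lower: "\<And>y a. (y, a) \<in> G \<Longrightarrow> a - p (y - x\<^sub>0) \<le> v"
    and upper: "\<And>z b. (z, b) \<in> G \<Longrightarrow> v \<le> p (z + x\<^sub>0) - b"
  shows "dominated_graph p {(y + t *\<^sub>R x\<^sub>0, a + t * v) | y a t. (y, a) \<in> G}"
    (is "dominated_graph p ?G'")
  unfolding dominated_graph_def
proof (intro conjI allI impI)
  show "(0, 0) \<in> ?G'" using dominated_graph_zero[OF G] by force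
next
  have scale: "((1/t) *\<^sub>R y, (1/t) * a) \<in> G" if "(y, a) \<in> G" for y a t
    using dominated_graph_lincomb[OF G that dominated_graph_zero[OF G], of "1/t"] by simp
  have "a + t * v \<le> p (y + t *\<^sub>R x\<^sub>0)" if "(y, a) \<in> G" for y a t
  proof (cases t "0 :: real" rule: linorder_cases)
    case less
    have "(1/(-t)) * a - p ((1/(-t)) *\<^sub>R y - x\<^sub>0) \<le> v" using lower[OF scale[OF that, of "-t"]] .
    moreover have "p (y + t *\<^sub>R x\<^sub>0) = - t * p ((1/(-t)) *\<^sub>R y - x\<^sub>0)"
      using sublinear_scaleR[OF p, of "-t" "(1/(-t)) *\<^sub>R y - x\<^sub>0"] less by (simp add: algebra_simps)
    ultimately show ?thesis using less by (simp add: field_simps)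
  next
    case equal
    then show ?thesis using dominated_graph_le[OF G that] by simp
  next
    case greater
    have "v \<le> p ((1/t) *\<^sub>R y + x\<^sub>0) - (1/t) * a" using upper[OF scale[OF that, of t]] .
    moreover have "p (y + t *\<^sub>R x\<^sub>0) = t * p ((1/t) *\<^sub>R y + x\<^sub>0)"
      using sublinear_scaleR[OF p greater, of "(1/t) *\<^sub>R y + x\<^sub>0"] greater by (simp add: algebra_simps)
    ultimately show ?thesis using greater by (simp add: field_simps)
  qed
  then show "b \<le> p x" if "(x, b) \<in> ?G'" for x b using that by blast
next
  fix x b y d c
  assume "(x, b) \<in> ?G'" "(y, d) \<in> ?G'"
  then obtain x' a t y' a' t' where
    "x = x' + t *\<^sub>R x\<^sub>0" "b = a + t * v" "(x', a) \<in> G"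
    "y = y' + t' *\<^sub>R x\<^sub>0" "d = a' + t' * v" "(y', a') \<in> G" by blast
  then have "(c *\<^sub>R x + y, c * b + d) =
      ((c *\<^sub>R x' + y') + (c * t + t') *\<^sub>R x\<^sub>0, (c * a + a') + (c * t + t') * v)"
    and "(c *\<^sub>R x' + y', c * a + a') \<in> G"
    using dominated_graph_lincomb[OF G] by (auto simp: algebra_simps)
  then show "(c *\<^sub>R x + y, c * b + d) \<in> ?G'" by blast
qed

lemma dominated_graph_total:
  assumes p: "sublinear p" and G: "dominated_graph p G"
    and maximal: "\<And>X. dominated_graph p X \<Longrightarrow> G \<subseteq> X \<Longrightarrow> X = G"
  shows "\<exists>a. (x\<^sub>0, a) \<in> G"
proof -
  have bound: "a - p (y - x\<^sub>0) \<le> p (z + x\<^sub>0) - b" if "(y, a) \<in> G" "(z, b) \<in> G" for y a z b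
  proof -
    have "a + b \<le> p ((y - x\<^sub>0) + (z + x\<^sub>0))"
      using dominated_graph_le[OF G dominated_graph_lincomb[OF G that, of 1]] by simp
    then show ?thesis using sublinear_add[OF p, of "y - x\<^sub>0" "z + x\<^sub>0"] by linarith
  qed
  define v where "v = (SUP (y, a)\<in>G. a - p (y - x\<^sub>0))"
  have bdd: "bdd_above ((\<lambda>(y, a). a - p (y - x\<^sub>0)) ` G)"
    by (intro bdd_aboveI[where M = "p x\<^sub>0"]) (use bound[OF _ dominated_graph_zero[OF G]] in auto)
  have "a - p (y - x\<^sub>0) \<le> v" if "(y, a) \<in> G" for y a
    unfolding v_def using cSUP_upper[OF that bdd] by simp
  moreover have "v \<le> p (z + x\<^sub>0) - b" if "(z, b) \<in> G" for z b
    unfolding v_def using bound that dominated_graph_zero[OF G] by (auto intro!: cSUP_least)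
  ultimately have "dominated_graph p {(y + t *\<^sub>R x\<^sub>0, a + t * v) | y a t. (y, a) \<in> G}"
    (is "dominated_graph p ?G'") by (rule dominated_graph_extend[OF p G])
  moreover have "G \<subseteq> ?G'" by (force intro: exI[of _ 0])
  ultimately have "?G' = G" by (rule maximal)
  moreover have "(x\<^sub>0, v) \<in> ?G'"
    using dominated_graph_zero[OF G] by (force intro: exI[of _ 1])
  ultimately show ?thesis by blast
qed

theorem sublinear_dominated_linear_exists:
  assumes p: "sublinear p"
  shows "\<exists>g. linear g \<and> (\<forall>x. g x \<le> p x)"
proof -
  obtain G where G: "dominated_graph p G"
    and maximal: "\<And>X. dominated_graph p X \<Longrightarrow> G \<subseteq> X \<Longrightarrow> X = G"
    using Zorn_Lemma2[of "Collect (dominated_graph p)"] dominated_graph_chain[OF p] by auto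
  define g where "g x = (THE a. (x, a) \<in> G)" for x
  have graph: "(x, g x) \<in> G" for x
    using dominated_graph_total[OF p G maximal] dominated_graph_unique[OF p G]
    unfolding g_def by (metis theI)
  have g_eq: "g x = a" if "(x, a) \<in> G" for x a
    using dominated_graph_unique[OF p G graph that] .
  have "linear g"
  proof (rule linearI)
    show "g (x + y) = g x + g y" for x y
      using g_eq[OF dominated_graph_lincomb[OF G graph graph, of 1]] by simp
    show "g (c *\<^sub>R x) = c *\<^sub>R g x" for c x
      using g_eq[OF dominated_graph_lincomb[OF G graph dominated_graph_zero[OF G], of c]] by simp
  qed
  then show ?thesis using dominated_graph_le[OF G graph] by blast
qed


section \<open>Separation with margin\<close>

text \<open>Bounded by the norm and at most \<open>-infdist q C\<close> on \<open>C - q\<close>, so its linear minorants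
  (Hahn--Banach) separate \<open>q\<close> from \<open>C\<close> with margin \<open>infdist q C\<close>.\<close>
definition margin_gauge :: "'a::real_normed_vector set \<Rightarrow> 'a \<Rightarrow> 'a \<Rightarrow> real" where
  "margin_gauge C q x = Inf {norm (x + t *\<^sub>R (q - c)) - t * infdist q C | t c. 0 \<le> t \<and> c \<in> C}"

lemma margin_gauge_le:
  assumes "0 \<le> t" "c \<in> C"
  shows "margin_gauge C q x \<le> norm (x + t *\<^sub>R (q - c)) - t * infdist q C"
  unfolding margin_gauge_def
proof (rule cInf_lower)
  show "norm (x + t *\<^sub>R (q - c)) - t * infdist q C \<in>
      {norm (x + t *\<^sub>R (q - c)) - t * infdist q C | t c. 0 \<le> t \<and> c \<in> C}"
    using assms by blast
  have "- norm x \<le> norm (x + s *\<^sub>R (q - d)) - s * infdist q C" if "0 \<le> s" "d \<in> C" for s d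
  proof -
    have "s * infdist q C \<le> norm (s *\<^sub>R (q - d))"
      using infdist_le[OF that(2), of q] that(1) by (simp add: mult_left_mono dist_norm)
    also have "\<dots> \<le> norm (x + s *\<^sub>R (q - d)) + norm x"
      using norm_triangle_ineq2[of "s *\<^sub>R (q - d)" "-x"] by (simp add: algebra_simps)
    finally show ?thesis by linarith
  qed
  then show "bdd_below {norm (x + t *\<^sub>R (q - c)) - t * infdist q C | t c. 0 \<le> t \<and> c \<in> C}"
    by (intro bdd_belowI[of _ "- norm x"]) blast
qed

lemma margin_gauge_greatest:
  assumes "C \<noteq> {}" "\<And>t c. 0 \<le> t \<Longrightarrow> c \<in> C \<Longrightarrow> z \<le> norm (x + t *\<^sub>R (q - c)) - t * infdist q C"
  shows "z \<le> margin_gauge C q x"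
  unfolding margin_gauge_def
proof (rule cInf_greatest)
  obtain c where "c \<in> C" using assms(1) by blast
  then have "norm (x + 0 *\<^sub>R (q - c)) - 0 * infdist q C \<in>
      {norm (x + t *\<^sub>R (q - c)) - t * infdist q C | t c. 0 \<le> t \<and> c \<in> C}" by blast
  then show "{norm (x + t *\<^sub>R (q - c)) - t * infdist q C | t c. 0 \<le> t \<and> c \<in> C} \<noteq> {}"
    by blast
qed (use assms(2) in blast)

lemma margin_gauge_le_norm:
  assumes "C \<noteq> {}"
  shows "margin_gauge C q x \<le> norm x"
  using assms margin_gauge_le[of 0 _ C q x] by auto

lemma margin_gauge_sum_le:
  fixes t s :: real
  assumes C: "convex C" and "0 \<le> t" "c \<in> C" "0 \<le> s" "d \<in> C"
  shows "margin_gauge C q (x + y) \<le>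
    (norm (x + t *\<^sub>R (q - c)) - t * infdist q C) + (norm (y + s *\<^sub>R (q - d)) - s * infdist q C)"
proof (cases "t + s = 0")
  case True
  then have "t = 0" "s = 0" using assms by auto
  moreover have "margin_gauge C q (x + y) \<le> norm (x + y)"
    using margin_gauge_le_norm[of C q "x + y"] assms(3) by blast
  ultimately show ?thesis using norm_triangle_ineq[of x y] by simp
next
  case False
  then have ts: "0 < t + s" using assms by auto
  define e where "e = (t / (t + s)) *\<^sub>R c + (s / (t + s)) *\<^sub>R d"
  have "e \<in> C"
    unfolding e_def using assms ts by (intro convexD[OF C]) (auto simp: add_divide_distrib[symmetric])
  moreover have "(t + s) *\<^sub>R e = t *\<^sub>R c + s *\<^sub>R d"
    unfolding e_def using ts by (simp add: scaleR_add_right)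
  then have "(x + y) + (t + s) *\<^sub>R (q - e) = (x + t *\<^sub>R (q - c)) + (y + s *\<^sub>R (q - d))"
    by (simp add: algebra_simps)
  ultimately show ?thesis
    using margin_gauge_le[of "t + s" e C q "x + y"] ts
      norm_triangle_ineq[of "x + t *\<^sub>R (q - c)" "y + s *\<^sub>R (q - d)"]
    by (simp add: algebra_simps)
qed

lemma sublinear_margin_gauge:
  assumes C: "convex C" "C \<noteq> {}"
  shows "sublinear (margin_gauge C q)"
  unfolding sublinear_def
proof (intro conjI allI impI)
  fix x y
  have "margin_gauge C q (x + y) - margin_gauge C q x \<le> margin_gauge C q y"
  proof (rule margin_gauge_greatest[OF C(2)])
    fix s :: real and d assume "0 \<le> s" "d \<in> C"
    have "margin_gauge C q (x + y) - (norm (y + s *\<^sub>R (q - d)) - s * infdist q C)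
        \<le> margin_gauge C q x"
      using margin_gauge_sum_le[OF C(1) _ _ \<open>0 \<le> s\<close> \<open>d \<in> C\<close>]
      by (intro margin_gauge_greatest[OF C(2)]) (simp add: algebra_simps)
    then show "margin_gauge C q (x + y) - margin_gauge C q x
        \<le> norm (y + s *\<^sub>R (q - d)) - s * infdist q C" by linarith
  qed
  then show "margin_gauge C q (x + y) \<le> margin_gauge C q x + margin_gauge C q y" by linarith
next
  fix a :: real and x assume a: "0 < a"
  have "margin_gauge C q (a *\<^sub>R x) / a \<le> margin_gauge C q x"
  proof (rule margin_gauge_greatest[OF C(2)])
    fix t :: real and c assume "0 \<le> t" "c \<in> C"
    then have "margin_gauge C q (a *\<^sub>R x) \<le> norm (a *\<^sub>R x + (a * t) *\<^sub>R (q - c)) - (a * t) * infdist q C"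
      using margin_gauge_le[of "a * t" c C q "a *\<^sub>R x"] a by simp
    also have "a *\<^sub>R x + (a * t) *\<^sub>R (q - c) = a *\<^sub>R (x + t *\<^sub>R (q - c))"
      by (simp add: scaleR_add_right)
    also have "norm \<dots> = a * norm (x + t *\<^sub>R (q - c))"
      using a by simp
    finally show "margin_gauge C q (a *\<^sub>R x) / a \<le> norm (x + t *\<^sub>R (q - c)) - t * infdist q C"
      using a by (simp add: field_simps)
  qed
  then show "margin_gauge C q (a *\<^sub>R x) \<le> a * margin_gauge C q x"
    using a by (simp add: field_simps)
qed

lemma blinfun_normalize_margin:
  fixes \<theta>\<^sub>0 :: "'a::real_normed_vector \<Rightarrow>\<^sub>L real"
  assumes "norm \<theta>\<^sub>0 \<le> 1" "0 < \<delta>" "c\<^sub>0 \<in> C"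
    and margin: "\<And>c. c \<in> C \<Longrightarrow> \<delta> \<le> blinfun_apply \<theta>\<^sub>0 q - blinfun_apply \<theta>\<^sub>0 c"
  shows "\<exists>\<theta>::'a \<Rightarrow>\<^sub>L real. norm \<theta> = 1 \<and> (\<forall>c\<in>C. blinfun_apply \<theta> c \<le> blinfun_apply \<theta> q - \<delta>)"
proof -
  have "\<delta> \<le> norm \<theta>\<^sub>0 * norm (q - c\<^sub>0)"
    using margin[OF \<open>c\<^sub>0 \<in> C\<close>] norm_blinfun[of \<theta>\<^sub>0 "q - c\<^sub>0"] by (simp add: blinfun.diff_right)
  then have "norm \<theta>\<^sub>0 \<noteq> 0" using \<open>0 < \<delta>\<close> by auto
  then have pos: "0 < norm \<theta>\<^sub>0" by simp
  show ?thesis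
  proof (intro exI conjI ballI)
    show "norm ((1 / norm \<theta>\<^sub>0) *\<^sub>R \<theta>\<^sub>0) = 1" using pos by simp
    fix c assume "c \<in> C"
    have "\<delta> \<le> \<delta> / norm \<theta>\<^sub>0"
      using assms(1,2) pos by (simp add: le_divide_eq)
    also have "\<dots> \<le> (blinfun_apply \<theta>\<^sub>0 q - blinfun_apply \<theta>\<^sub>0 c) / norm \<theta>\<^sub>0"
      using margin[OF \<open>c \<in> C\<close>] pos by (simp add: divide_right_mono)
    finally show "blinfun_apply ((1 / norm \<theta>\<^sub>0) *\<^sub>R \<theta>\<^sub>0) c
        \<le> blinfun_apply ((1 / norm \<theta>\<^sub>0) *\<^sub>R \<theta>\<^sub>0) q - \<delta>"
      by (simp add: diff_divide_distrib blinfun.scaleR_left)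
  qed
qed

lemma separating_functional_exists:
  fixes C :: "'a::real_normed_vector set"
  assumes C: "convex C" "C \<noteq> {}" and pos: "0 < infdist q C"
  shows "\<exists>\<theta>::'a \<Rightarrow>\<^sub>L real. norm \<theta> = 1 \<and> (\<forall>c\<in>C. blinfun_apply \<theta> c \<le> blinfun_apply \<theta> q - infdist q C)"
proof -
  obtain g where g: "linear g" "\<And>x. g x \<le> margin_gauge C q x"
    using sublinear_dominated_linear_exists[OF sublinear_margin_gauge[OF C]] by blast
  have g_norm: "\<bar>g x\<bar> \<le> norm x" for x
  proof -
    have "g x \<le> norm x" "- g x \<le> norm x"
      using g(2)[of x] g(2)[of "-x"] margin_gauge_le_norm[OF C(2), of q x]
        margin_gauge_le_norm[OF C(2), of q "-x"] linear_neg[OF g(1), of x] by auto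
    then show ?thesis by linarith
  qed
  have "bounded_linear g"
    using g(1) g_norm by (intro bounded_linear_intro[where K = 1]) (auto simp: linear_add linear_scale)
  then obtain \<theta>\<^sub>0 :: "'a \<Rightarrow>\<^sub>L real" where \<theta>\<^sub>0: "blinfun_apply \<theta>\<^sub>0 = g"
    using bounded_linear_Blinfun_apply by blast
  have "norm \<theta>\<^sub>0 \<le> 1" using g_norm \<theta>\<^sub>0 by (intro norm_blinfun_bound) auto
  moreover have "infdist q C \<le> blinfun_apply \<theta>\<^sub>0 q - blinfun_apply \<theta>\<^sub>0 c" if "c \<in> C" for c
  proof -
    have "g (c - q) \<le> - infdist q C"
      using g(2)[of "c - q"] margin_gauge_le[OF _ that, of 1 q "c - q"] by simp
    then show ?thesis using linear_diff[OF g(1), of c q] \<theta>\<^sub>0 by simp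
  qed
  moreover obtain c\<^sub>0 where "c\<^sub>0 \<in> C" using C(2) by blast
  ultimately show ?thesis using blinfun_normalize_margin[OF _ pos] by blast
qed

definition separating_functional :: "'a::real_normed_vector set \<Rightarrow> 'a \<Rightarrow> ('a \<Rightarrow>\<^sub>L real)" where
  "separating_functional C q = (SOME \<theta>. norm \<theta> = 1 \<and>
     (\<forall>c\<in>C. blinfun_apply \<theta> c \<le> blinfun_apply \<theta> q - infdist q C))"

lemma separating_functional:
  assumes "convex C" "C \<noteq> {}" "0 < infdist q C"
  shows "norm (separating_functional C q) = 1"
    and "\<And>c. c \<in> C \<Longrightarrow> blinfun_apply (separating_functional C q) c
           \<le> blinfun_apply (separating_functional C q) q - infdist q C"
  using someI_ex[OF separating_functional_exists[OF assms]]
  unfolding separating_functional_def by blast+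


section \<open>Hausdorff distance and support functions\<close>

lemma nbhd_mono: "\<epsilon> \<le> \<delta> \<Longrightarrow> nbhd A \<epsilon> \<subseteq> nbhd A \<delta>"
  unfolding nbhd_def using less_le_trans by blast

lemma convex_nbhd:
  fixes K :: "'a::real_normed_vector set"
  assumes "convex K"
  shows "convex (nbhd K \<epsilon>)"
proof -
  have "nbhd K \<epsilon> = K + ball 0 \<epsilon>"
  proof (intro set_eqI iffI)
    fix x assume "x \<in> nbhd K \<epsilon>"
    then obtain k where "k \<in> K" "dist x k < \<epsilon>" unfolding nbhd_def by blast
    then have "k + (x - k) \<in> K + ball 0 \<epsilon>"
      by (intro set_plus_intro) (auto simp: dist_norm norm_minus_commute)
    then show "x \<in> K + ball 0 \<epsilon>" by simp
  next
    fix x assume "x \<in> K + ball 0 \<epsilon>"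
    then obtain k b where "k \<in> K" "norm b < \<epsilon>" "x = k + b" by (auto elim: set_plus_elim)
    then show "x \<in> nbhd K \<epsilon>" unfolding nbhd_def by (intro CollectI bexI[of _ k]) (auto simp: dist_norm)
  qed
  then show ?thesis using assms by (simp add: convex_set_plus)
qed

lemma compact_subset_nbhd:
  fixes A B :: "'a::metric_space set"
  assumes "compact A" "B \<noteq> {}"
  shows "\<exists>\<epsilon>>0. A \<subseteq> nbhd B \<epsilon>"
proof -
  obtain b where "b \<in> B" using assms(2) by blast
  moreover obtain r where "0 < r" "A \<subseteq> ball b r"
    using bounded_subset_ballD[OF compact_imp_bounded[OF assms(1)]] by blast
  moreover have "dist a b < r" if "a \<in> A" for a
    using \<open>A \<subseteq> ball b r\<close> that by (auto simp: dist_commute)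
  ultimately have "A \<subseteq> nbhd B r" unfolding nbhd_def by blast
  then show ?thesis using \<open>0 < r\<close> by blast
qed

lemma hausdorff_distance_commute: "hausdorff_distance A B = hausdorff_distance B A"
  unfolding hausdorff_distance_def by simp

lemma hausdorff_distance_lessD:
  assumes "A \<in> KB" "B \<in> KB" "hausdorff_distance A B < e"
  shows "A \<subseteq> nbhd B e"
proof -
  have lt: "Inf {\<epsilon>. \<epsilon> > 0 \<and> A \<subseteq> nbhd B \<epsilon>} < e"
    using assms(3) unfolding hausdorff_distance_def by simp
  have "{\<epsilon>. \<epsilon> > 0 \<and> A \<subseteq> nbhd B \<epsilon>} \<noteq> {}"
    using compact_subset_nbhd[of A B] assms(1,2) by (auto simp: KB_def)
  from cInf_lessD[OF this lt] obtain \<epsilon> where "A \<subseteq> nbhd B \<epsilon>" "\<epsilon> < e"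
    by blast
  then show ?thesis using nbhd_mono[of \<epsilon> e B] by auto
qed

lemma support_fun_upper:
  assumes "compact A" "a \<in> A"
  shows "blinfun_apply \<theta> a \<le> support_fun A \<theta>"
  unfolding support_fun_def
proof (rule cSUP_upper[OF assms(2)])
  obtain R where "\<forall>a\<in>A. norm a \<le> R"
    using compact_imp_bounded[OF assms(1)] bounded_iff by blast
  have "blinfun_apply \<theta> a \<le> norm \<theta> * R" if "a \<in> A" for a
  proof -
    have "blinfun_apply \<theta> a \<le> norm \<theta> * norm a" using norm_blinfun[of \<theta> a] by simp
    also have "\<dots> \<le> norm \<theta> * R" using \<open>\<forall>a\<in>A. norm a \<le> R\<close> that by (simp add: mult_left_mono)
    finally show ?thesis .
  qed
  then show "bdd_above (blinfun_apply \<theta> ` A)" by (rule bdd_aboveI2)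
qed

lemma support_fun_least:
  assumes "A \<noteq> {}" "\<And>a. a \<in> A \<Longrightarrow> blinfun_apply \<theta> a \<le> z"
  shows "support_fun A \<theta> \<le> z"
  unfolding support_fun_def using assms by (rule cSUP_least)

lemma support_fun_le_nbhd:
  assumes "A \<noteq> {}" "compact B" "A \<subseteq> nbhd B e" "norm \<theta> = 1"
  shows "support_fun A \<theta> \<le> support_fun B \<theta> + e"
proof (rule support_fun_least[OF assms(1)])
  fix a assume "a \<in> A"
  then obtain b where "b \<in> B" "norm (a - b) < e"
    using assms(3) unfolding nbhd_def by (auto simp: dist_norm)
  moreover have "blinfun_apply \<theta> (a - b) \<le> norm (a - b)"
    using norm_blinfun[of \<theta> "a - b"] assms(4) by simp
  ultimately show "blinfun_apply \<theta> a \<le> support_fun B \<theta> + e"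
    using support_fun_upper[OF assms(2), of b \<theta>] by (simp add: blinfun.diff_right)
qed

lemma support_fun_diff_le_hausdorff_distance:
  assumes "A \<in> KB" "B \<in> KB" "norm \<theta> = 1"
  shows "\<bar>support_fun A \<theta> - support_fun B \<theta>\<bar> \<le> hausdorff_distance A B"
proof (rule field_le_epsilon)
  fix d :: real assume "0 < d"
  then have "A \<subseteq> nbhd B (hausdorff_distance A B + d)" "B \<subseteq> nbhd A (hausdorff_distance A B + d)"
    using hausdorff_distance_lessD[OF assms(1,2)] hausdorff_distance_lessD[OF assms(2,1)]
    by (auto simp: hausdorff_distance_commute)
  moreover have "A \<noteq> {}" "compact A" "B \<noteq> {}" "compact B" using assms(1,2) by (auto simp: KB_def)
  ultimately have "support_fun A \<theta> \<le> support_fun B \<theta> + (hausdorff_distance A B + d)"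
    "support_fun B \<theta> \<le> support_fun A \<theta> + (hausdorff_distance A B + d)"
    using support_fun_le_nbhd assms(3) by blast+
  then show "\<bar>support_fun A \<theta> - support_fun B \<theta>\<bar> \<le> hausdorff_distance A B + d" by linarith
qed

lemma tendsto_support_fun_hausdorff:
  assumes "A \<in> KB" "\<And>n. S n \<in> KB" "norm \<theta> = 1" "(\<lambda>n. hausdorff_distance (S n) A) \<longlonglongrightarrow> 0"
  shows "(\<lambda>n. support_fun (S n) \<theta>) \<longlonglongrightarrow> support_fun A \<theta>"
proof -
  have "(\<lambda>n. support_fun (S n) \<theta> - support_fun A \<theta>) \<longlonglongrightarrow> 0"
    using support_fun_diff_le_hausdorff_distance[OF assms(2,1,3)]
    by (intro Lim_null_comparison[OF _ assms(4)]) simp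
  then show ?thesis by (simp add: LIM_zero_iff)
qed

lemma convex_hausdorff_limit:
  fixes K :: "'a::real_normed_vector set"
  assumes K: "K \<in> KB" and S: "\<And>n. S n \<in> KB" "\<And>n. convex (S n)"
    and lim: "(\<lambda>n. hausdorff_distance (S n) K) \<longlonglongrightarrow> 0"
  shows "convex K"
proof (rule convexI)
  fix x y u v assume xy: "x \<in> K" "y \<in> K" and uv: "0 \<le> u" "0 \<le> v" "u + v = (1::real)"
  have "closed K" using K by (simp add: KB_def compact_imp_closed)
  then show "u *\<^sub>R x + v *\<^sub>R y \<in> K"
  proof (rule closed_approachable[THEN iffD1], intro allI impI)
    fix e :: real assume "0 < e"
    then have "\<forall>\<^sub>F n in sequentially. hausdorff_distance (S n) K < e / 2"
      using order_tendstoD(2)[OF lim, of "e / 2"] by simp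
    then obtain n where "hausdorff_distance (S n) K < e / 2"
      using eventually_happens'[OF sequentially_bot] by blast
    then have near: "S n \<subseteq> nbhd K (e / 2)" "K \<subseteq> nbhd (S n) (e / 2)"
      using hausdorff_distance_lessD[OF S(1) K] hausdorff_distance_lessD[OF K S(1)]
      by (auto simp: hausdorff_distance_commute)
    then have "u *\<^sub>R x + v *\<^sub>R y \<in> nbhd (S n) (e / 2)"
      using xy uv convexD[OF convex_nbhd[OF S(2)]] by blast
    then obtain s k where "s \<in> S n" "dist (u *\<^sub>R x + v *\<^sub>R y) s < e / 2" "k \<in> K" "dist s k < e / 2"
      using near(1) unfolding nbhd_def by blast
    moreover have "dist (u *\<^sub>R x + v *\<^sub>R y) k \<le> dist (u *\<^sub>R x + v *\<^sub>R y) s + dist s k"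
      by (rule dist_triangle)
    ultimately have "dist (u *\<^sub>R x + v *\<^sub>R y) k < e" by linarith
    then show "\<exists>k\<in>K. dist k (u *\<^sub>R x + v *\<^sub>R y) < e"
      using \<open>k \<in> K\<close> by (auto simp: dist_commute)
  qed
qed


section \<open>A countable separating family of functionals\<close>

lemma finite_dense_net:
  fixes K :: "'a::metric_space set"
  assumes K: "compact K" "K \<noteq> {}" and dense: "\<And>y e. 0 < e \<Longrightarrow> \<exists>d\<in>D. dist y d < e"
    and "0 < \<eta>"
  obtains F where "finite F" "F \<subseteq> D" "F \<noteq> {}" "K \<subseteq> nbhd F \<eta>" "F \<subseteq> nbhd K \<eta>"
proof -
  have cover: "K \<subseteq> (\<Union>d\<in>D \<inter> nbhd K \<eta>. ball d \<eta>)"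
  proof
    fix k assume "k \<in> K"
    then obtain d where "d \<in> D" "dist k d < \<eta>" using dense \<open>0 < \<eta>\<close> by blast
    then show "k \<in> (\<Union>d\<in>D \<inter> nbhd K \<eta>. ball d \<eta>)"
      using \<open>k \<in> K\<close> unfolding nbhd_def by (auto simp: dist_commute)
  qed
  obtain F where F: "F \<subseteq> D \<inter> nbhd K \<eta>" "finite F" "K \<subseteq> (\<Union>d\<in>F. ball d \<eta>)"
    by (rule compactE_image[OF K(1) _ cover]) simp
  moreover have "K \<subseteq> nbhd F \<eta>"
    using F(3) unfolding nbhd_def by (force simp: dist_commute)
  moreover have "F \<noteq> {}" using F(3) K(2) by blast
  ultimately show ?thesis using that by blast
qed

lemma dense_hull_separation:
  fixes K :: "'a::real_normed_vector set"
  assumes K: "compact K" "convex K" "K \<noteq> {}" and "x \<notin> K"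
    and dense: "\<And>y e. 0 < e \<Longrightarrow> \<exists>d\<in>D. dist y d < e"
  obtains F q where "finite F" "F \<subseteq> D" "F \<noteq> {}" "q \<in> D" "0 < infdist q (convex hull F)"
    "\<And>\<theta>. norm \<theta> = 1 \<Longrightarrow>
       (\<forall>c\<in>convex hull F. blinfun_apply \<theta> c \<le> blinfun_apply \<theta> q - infdist q (convex hull F)) \<Longrightarrow>
       support_fun K \<theta> < blinfun_apply \<theta> x"
proof -
  define \<eta> where "\<eta> = infdist x K / 4"
  have "0 < \<eta>"
    unfolding \<eta>_def using infdist_pos_not_in_closed[OF compact_imp_closed[OF K(1)] K(3) \<open>x \<notin> K\<close>] by simp
  then obtain F where F: "finite F" "F \<subseteq> D" "F \<noteq> {}" "K \<subseteq> nbhd F \<eta>" "F \<subseteq> nbhd K \<eta>"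
    using finite_dense_net[OF K(1,3) dense] by blast
  obtain q where q: "q \<in> D" "dist x q < \<eta>" using dense \<open>0 < \<eta>\<close> by blast
  define C where "C = convex hull F"
  have C: "compact C" "C \<noteq> {}"
    unfolding C_def using F(1,3) by (simp_all add: finite_imp_compact_convex_hull)
  have "K \<subseteq> nbhd C \<eta>"
    using F(4) hull_subset[of F convex] unfolding C_def nbhd_def by blast
  have "C \<subseteq> nbhd K \<eta>" unfolding C_def using hull_minimal[of F "nbhd K \<eta>" convex] F(5) convex_nbhd[OF K(2)] by blast
  have far: "2 * \<eta> \<le> infdist q C"
  proof -
    have "2 * \<eta> \<le> dist q c" if c: "c \<in> C" for c
    proof -
      obtain k where k: "k \<in> K" "dist c k < \<eta>"
        using \<open>C \<subseteq> nbhd K \<eta>\<close> c unfolding nbhd_def by blast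
      have "4 * \<eta> \<le> dist x k" using infdist_le[OF k(1), of x] unfolding \<eta>_def by simp
      moreover have "dist x k \<le> dist x q + dist q k" "dist q k \<le> dist q c + dist c k"
        by (rule dist_triangle)+
      ultimately show ?thesis using q(2) k(2) by linarith
    qed
    then show ?thesis using C(2) by (simp add: infdist_notempty cINF_greatest)
  qed
  show ?thesis
  proof (rule that[OF F(1-3) q(1)])
    show "0 < infdist q (convex hull F)" using far \<open>0 < \<eta>\<close> unfolding C_def by linarith
    fix \<theta> :: "'a \<Rightarrow>\<^sub>L real"
    assume "norm \<theta> = 1"
      and sep: "\<forall>c\<in>convex hull F. blinfun_apply \<theta> c \<le> blinfun_apply \<theta> q - infdist q (convex hull F)"
    have "support_fun K \<theta> \<le> support_fun C \<theta> + \<eta>"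
      using support_fun_le_nbhd[OF K(3) C(1) \<open>K \<subseteq> nbhd C \<eta>\<close> \<open>norm \<theta> = 1\<close>] .
    moreover have "support_fun C \<theta> \<le> blinfun_apply \<theta> q - infdist q C"
      using sep unfolding C_def by (intro support_fun_least) (auto simp: F(3))
    moreover have "blinfun_apply \<theta> (q - x) < \<eta>"
      using norm_blinfun[of \<theta> "q - x"] \<open>norm \<theta> = 1\<close> q(2) by (simp add: dist_norm norm_minus_commute)
    ultimately show "support_fun K \<theta> < blinfun_apply \<theta> x"
      using far by (simp add: blinfun.diff_right)
  qed
qed

lemma countable_separating_functionals:
  obtains \<Theta> :: "('a::{real_normed_vector, second_countable_topology} \<Rightarrow>\<^sub>L real) set"
  where "countable \<Theta>" "\<And>\<theta>. \<theta> \<in> \<Theta> \<Longrightarrow> norm \<theta> = 1"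
    "\<And>K x. compact K \<Longrightarrow> convex K \<Longrightarrow> K \<noteq> {} \<Longrightarrow> x \<notin> K \<Longrightarrow>
       \<exists>\<theta>\<in>\<Theta>. support_fun K \<theta> < blinfun_apply \<theta> x"
proof -
  obtain D :: "'a set" where D: "countable D" "\<And>X. open X \<Longrightarrow> X \<noteq> {} \<Longrightarrow> \<exists>d\<in>D. d \<in> X"
    using countable_dense_exists by blast
  have dense: "\<exists>d\<in>D. dist y d < e" if "0 < e" for y e
  proof -
    have "ball y e \<noteq> {}" using that by simp
    then show ?thesis using D(2)[of "ball y e"] by auto
  qed
  define \<Theta> where "\<Theta> = {separating_functional (convex hull F) q | F q. finite F \<and> F \<subseteq> D \<and> F \<noteq> {} \<and> q \<in> D \<and>
    0 < infdist q (convex hull F)}"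
  have "\<Theta> \<subseteq> (\<lambda>(F, q). separating_functional (convex hull F) q) ` ({F. finite F \<and> F \<subseteq> D} \<times> D)"
  proof
    fix \<theta> assume "\<theta> \<in> \<Theta>"
    then obtain F q where "\<theta> = separating_functional (convex hull F) q" "finite F" "F \<subseteq> D" "q \<in> D"
      unfolding \<Theta>_def by blast
    then show "\<theta> \<in> (\<lambda>(F, q). separating_functional (convex hull F) q) ` ({F. finite F \<and> F \<subseteq> D} \<times> D)"
      by (intro image_eqI[where x = "(F, q)"]) simp_all
  qed
  moreover have "countable ({F. finite F \<and> F \<subseteq> D} \<times> D)"
    using countable_Collect_finite_subset[OF D(1)] D(1) by simp
  ultimately have "countable \<Theta>" by (rule countable_subset[OF _ countable_image])
  moreover have "norm \<theta> = 1" if "\<theta> \<in> \<Theta>" for \<theta>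
  proof -
    obtain F q where "\<theta> = separating_functional (convex hull F) q" "F \<noteq> {}" "0 < infdist q (convex hull F)"
      using \<open>\<theta> \<in> \<Theta>\<close> unfolding \<Theta>_def by blast
    then show ?thesis using separating_functional(1)[of "convex hull F" q] by simp
  qed
  moreover have "\<exists>\<theta>\<in>\<Theta>. support_fun K \<theta> < blinfun_apply \<theta> x"
    if K: "compact K" "convex K" "K \<noteq> {}" "x \<notin> K" for K x
  proof -
    obtain F q where Fq: "finite F" "F \<subseteq> D" "F \<noteq> {}" "q \<in> D" "0 < infdist q (convex hull F)"
      and sep_K: "\<And>\<theta>. norm \<theta> = 1 \<Longrightarrow>
       (\<forall>c\<in>convex hull F. blinfun_apply \<theta> c \<le> blinfun_apply \<theta> q - infdist q (convex hull F)) \<Longrightarrow>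
       support_fun K \<theta> < blinfun_apply \<theta> x"
      using dense_hull_separation[OF K dense] by blast
    then have "separating_functional (convex hull F) q \<in> \<Theta>" unfolding \<Theta>_def by blast
    moreover have "support_fun K (separating_functional (convex hull F) q) < blinfun_apply (separating_functional (convex hull F) q) x"
      using separating_functional[of "convex hull F" q] Fq(3,5) by (intro sep_K) simp_all
    ultimately show ?thesis by blast
  qed
  ultimately show ?thesis using that by blast
qed

lemma LIMSEQ_subseq_subseq:
  fixes X :: "nat \<Rightarrow> 'a::metric_space"
  assumes "\<And>s :: nat \<Rightarrow> nat. strict_mono s \<Longrightarrow> \<exists>r. strict_mono r \<and> (X \<circ> s \<circ> r) \<longlonglongrightarrow> L"
  shows "X \<longlonglongrightarrow> L"
proof (rule tendstoI, rule ccontr)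
  fix e :: real assume "0 < e" "\<not> (\<forall>\<^sub>F n in sequentially. dist (X n) L < e)"
  then obtain s :: "nat \<Rightarrow> nat" where "strict_mono s" "\<forall>n. \<not> dist (X (s n)) L < e"
    using not_eventually_sequentiallyD by blast
  moreover obtain r where "(X \<circ> s \<circ> r) \<longlonglongrightarrow> L" using assms[OF \<open>strict_mono s\<close>] by blast
  then have "\<forall>\<^sub>F n in sequentially. dist (X (s (r n))) L < e"
    using tendstoD[OF _ \<open>0 < e\<close>] by (simp add: o_def)
  ultimately show False
    using eventually_happens'[OF sequentially_bot] by blast
qed

lemma hausdorff_subseq_limit:
  fixes S :: "nat \<Rightarrow> 'a::real_normed_vector set"
  assumes S: "\<And>n. S n \<in> KB" "\<And>n. convex (S n)" and "strict_mono r" "K \<in> KB"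
    and lim: "(\<lambda>k. hausdorff_distance (S (r k)) K) \<longlonglongrightarrow> 0"
  shows "convex K"
    and "norm \<theta> = 1 \<Longrightarrow> (\<lambda>n. support_fun (S n) \<theta>) \<longlonglongrightarrow> l \<Longrightarrow> support_fun K \<theta> = l"
proof -
  show "convex K" using convex_hausdorff_limit[OF \<open>K \<in> KB\<close> S lim] by blast
  assume "norm \<theta> = 1" "(\<lambda>n. support_fun (S n) \<theta>) \<longlonglongrightarrow> l"
  then have "(\<lambda>k. support_fun (S (r k)) \<theta>) \<longlonglongrightarrow> l"
    using LIMSEQ_subseq_LIMSEQ[OF _ \<open>strict_mono r\<close>] by (auto simp: o_def)
  moreover have "(\<lambda>k. support_fun (S (r k)) \<theta>) \<longlonglongrightarrow> support_fun K \<theta>"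
    using tendsto_support_fun_hausdorff[OF \<open>K \<in> KB\<close> S(1) \<open>norm \<theta> = 1\<close> lim] .
  ultimately show "support_fun K \<theta> = l" using LIMSEQ_unique by blast
qed

lemma support_fun_determines_convex:
  assumes unit: "\<And>\<theta>. \<theta> \<in> \<Theta> \<Longrightarrow> norm \<theta> = 1"
    and separating: "\<And>K x. compact K \<Longrightarrow> convex K \<Longrightarrow> K \<noteq> {} \<Longrightarrow> x \<notin> K \<Longrightarrow>
       \<exists>\<theta>\<in>\<Theta>. support_fun K \<theta> < blinfun_apply \<theta> x"
    and KL: "K \<in> KB" "convex K" "L \<in> KB" "convex L"
    and eq: "\<And>\<theta>. \<theta> \<in> \<Theta> \<Longrightarrow> support_fun K \<theta> = support_fun L \<theta>"
  shows "K = L"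
proof -
  have sub: "Y \<subseteq> X"
    if "X \<in> KB" "convex X" "Y \<in> KB" "\<And>\<theta>. \<theta> \<in> \<Theta> \<Longrightarrow> support_fun X \<theta> = support_fun Y \<theta>" for X Y
  proof
    fix x assume "x \<in> Y"
    have X: "compact X" "X \<noteq> {}" and "compact Y" using that(1,3) by (auto simp: KB_def)
    show "x \<in> X"
    proof (rule ccontr)
      assume "x \<notin> X"
      then obtain \<theta> where "\<theta> \<in> \<Theta>" "support_fun X \<theta> < blinfun_apply \<theta> x"
        using separating[OF X(1) \<open>convex X\<close> X(2)] by blast
      moreover have "blinfun_apply \<theta> x \<le> support_fun Y \<theta>"
        using support_fun_upper[OF \<open>compact Y\<close> \<open>x \<in> Y\<close>] .
      ultimately show False using that(4)[of \<theta>] by linarith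
    qed
  qed
  have "L \<subseteq> K" "K \<subseteq> L" using sub KL eq by simp_all
  then show ?thesis by (rule subset_antisym[rotated])
qed

lemma rel_compact_KB_subseq:
  fixes S :: "nat \<Rightarrow> 'a::metric_space set"
  assumes "rel_compact_KB X" "\<And>n. S n \<in> X"
  obtains r :: "nat \<Rightarrow> nat" and K
  where "strict_mono r" "K \<in> KB" "(\<lambda>k. hausdorff_distance (S (r k)) K) \<longlonglongrightarrow> 0"
proof -
  have "\<exists>r K. strict_mono r \<and> K \<in> KB \<and> (\<lambda>k. hausdorff_distance (S (r k)) K) \<longlonglongrightarrow> 0"
    using assms(1)[unfolded rel_compact_KB_def, THEN conjunct2, rule_format, OF assms(2)] .
  then show ?thesis using that by blast
qed

lemma support_fun_limit_point:
  fixes S :: "nat \<Rightarrow> 'a::real_normed_vector set"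
  assumes unit: "\<And>\<theta>. \<theta> \<in> \<Theta> \<Longrightarrow> norm \<theta> = 1"
    and S: "\<And>n. S n \<in> KB" "\<And>n. convex (S n)" "rel_compact_KB (range S)"
    and lim: "\<And>\<theta>. \<theta> \<in> \<Theta> \<Longrightarrow> (\<lambda>n. support_fun (S n) \<theta>) \<longlonglongrightarrow> \<phi> \<theta>"
  obtains A where "A \<in> KB" "convex A" "\<And>\<theta>. \<theta> \<in> \<Theta> \<Longrightarrow> support_fun A \<theta> = \<phi> \<theta>"
proof -
  obtain r :: "nat \<Rightarrow> nat" and A
    where r: "strict_mono r" "A \<in> KB" "(\<lambda>k. hausdorff_distance (S (r k)) A) \<longlonglongrightarrow> 0"
    using rel_compact_KB_subseq[OF S(3)] by blast
  show ?thesis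
  proof (rule that[OF r(2)])
    show "convex A" by (rule hausdorff_subseq_limit(1)[OF S(1,2) r])
    show "support_fun A \<theta> = \<phi> \<theta>" if "\<theta> \<in> \<Theta>" for \<theta>
      by (rule hausdorff_subseq_limit(2)[OF S(1,2) r unit[OF that] lim[OF that]])
  qed
qed

lemma hausdorff_tendsto_if_support_fun_tendsto:
  fixes S :: "nat \<Rightarrow> 'a::real_normed_vector set"
  assumes unit: "\<And>\<theta>. \<theta> \<in> \<Theta> \<Longrightarrow> norm \<theta> = 1"
    and separating: "\<And>K x. compact K \<Longrightarrow> convex K \<Longrightarrow> K \<noteq> {} \<Longrightarrow> x \<notin> K \<Longrightarrow>
       \<exists>\<theta>\<in>\<Theta>. support_fun K \<theta> < blinfun_apply \<theta> x"
    and S: "\<And>n. S n \<in> KB" "\<And>n. convex (S n)" "rel_compact_KB (range S)"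
    and lim: "\<And>\<theta>. \<theta> \<in> \<Theta> \<Longrightarrow> (\<lambda>n. support_fun (S n) \<theta>) \<longlonglongrightarrow> \<phi> \<theta>"
    and A: "A \<in> KB" "convex A" "\<And>\<theta>. \<theta> \<in> \<Theta> \<Longrightarrow> support_fun A \<theta> = \<phi> \<theta>"
  shows "(\<lambda>n. hausdorff_distance (S n) A) \<longlonglongrightarrow> 0"
proof (rule LIMSEQ_subseq_subseq)
  fix s :: "nat \<Rightarrow> nat" assume "strict_mono s"
  obtain r :: "nat \<Rightarrow> nat" and K
    where r: "strict_mono r" "K \<in> KB" "(\<lambda>k. hausdorff_distance (S ((s \<circ> r) k)) K) \<longlonglongrightarrow> 0"
    using rel_compact_KB_subseq[OF S(3), of "S \<circ> s"] by auto
  have "strict_mono (s \<circ> r)" using \<open>strict_mono s\<close> r(1) by (rule strict_mono_o)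
  note K = hausdorff_subseq_limit[OF S(1,2) this r(2,3)]
  have "support_fun K \<theta> = support_fun A \<theta>" if "\<theta> \<in> \<Theta>" for \<theta>
    using K(2)[OF unit[OF that] lim[OF that]] A(3)[OF that] by simp
  then have "K = A"
    using support_fun_determines_convex[OF unit separating r(2) K(1) A(1,2)] by blast
  then show "\<exists>r. strict_mono r \<and> ((\<lambda>n. hausdorff_distance (S n) A) \<circ> s \<circ> r) \<longlonglongrightarrow> 0"
    using r by (auto simp: o_def)
qed

theorem lemma13:
  fixes M :: "'w measure"
    and B :: "nat \<Rightarrow> 'w \<Rightarrow> 'a::{banach, second_countable_topology} set"
    and \<phi> :: "('a \<Rightarrow>\<^sub>L real) \<Rightarrow> real"
  assumes "prob_space M"
    and meas: "\<And>n. B n \<in> M \<rightarrow>\<^sub>M KB_borel"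
    and inKB: "\<And>n \<omega>. \<omega> \<in> space M \<Longrightarrow> B n \<omega> \<in> KB"
    and cvx: "\<And>n \<omega>. \<omega> \<in> space M \<Longrightarrow> convex (B n \<omega>)"
    and relc: "AE \<omega> in M. rel_compact_KB (range (\<lambda>n. B n \<omega>))"
    and conv: "\<And>\<theta>. norm \<theta> = 1 \<Longrightarrow>
                 (AE \<omega> in M. (\<lambda>n. support_fun (B n \<omega>) \<theta>) \<longlonglongrightarrow> \<phi> \<theta>)"
  shows "\<exists>A\<in>KB. (\<forall>\<theta>. norm \<theta> = 1 \<longrightarrow> support_fun A \<theta> = \<phi> \<theta>) \<and>
           (AE \<omega> in M. (\<lambda>n. hausdorff_distance (B n \<omega>) A) \<longlonglongrightarrow> 0)"
proof -
  obtain \<Theta> :: "('a \<Rightarrow>\<^sub>L real) set" where \<Theta>: "countable \<Theta>" "\<And>\<theta>. \<theta> \<in> \<Theta> \<Longrightarrow> norm \<theta> = 1"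
    and separating: "\<And>K x. compact K \<Longrightarrow> convex K \<Longrightarrow> K \<noteq> {} \<Longrightarrow> x \<notin> K \<Longrightarrow>
       \<exists>\<theta>\<in>\<Theta>. support_fun K \<theta> < blinfun_apply \<theta> x"
    by (rule countable_separating_functionals) (rule that)
  define good where "good \<omega> \<longleftrightarrow> \<omega> \<in> space M \<and> rel_compact_KB (range (\<lambda>n. B n \<omega>)) \<and>
    (\<forall>\<theta>\<in>\<Theta>. (\<lambda>n. support_fun (B n \<omega>) \<theta>) \<longlonglongrightarrow> \<phi> \<theta>)" for \<omega>
  have "AE \<omega> in M. \<forall>\<theta>\<in>\<Theta>. (\<lambda>n. support_fun (B n \<omega>) \<theta>) \<longlonglongrightarrow> \<phi> \<theta>"
    using \<Theta> conv by (simp add: AE_ball_countable)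
  then have AE_good: "AE \<omega> in M. good \<omega>"
    using relc AE_space by eventually_elim (simp add: good_def)
  have happens: "\<exists>\<omega>. P \<omega>" if "AE \<omega> in M. P \<omega>" for P
    using eventually_happens'[OF prob_space.ae_filter_bot[OF \<open>prob_space M\<close>] that] .
  have goodD: "\<And>n. B n \<omega> \<in> KB" "\<And>n. convex (B n \<omega>)" "rel_compact_KB (range (\<lambda>n. B n \<omega>))"
    "\<And>\<theta>. \<theta> \<in> \<Theta> \<Longrightarrow> (\<lambda>n. support_fun (B n \<omega>) \<theta>) \<longlonglongrightarrow> \<phi> \<theta>" if "good \<omega>" for \<omega>
    using that inKB cvx unfolding good_def by auto
  obtain \<omega>\<^sub>0 where "good \<omega>\<^sub>0" using happens[OF AE_good] by blast
  obtain A where A: "A \<in> KB" "convex A" "\<And>\<theta>. \<theta> \<in> \<Theta> \<Longrightarrow> support_fun A \<theta> = \<phi> \<theta>"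
    using support_fun_limit_point[OF \<Theta>(2) goodD[OF \<open>good \<omega>\<^sub>0\<close>]] by blast
  have lim: "(\<lambda>n. hausdorff_distance (B n \<omega>) A) \<longlonglongrightarrow> 0" if "good \<omega>" for \<omega>
    using hausdorff_tendsto_if_support_fun_tendsto[OF \<Theta>(2) separating goodD[OF that] A]
    by blast
  have "support_fun A \<theta> = \<phi> \<theta>" if unit: "norm \<theta> = 1" for \<theta>
  proof -
    obtain \<omega> where \<omega>: "good \<omega>" "(\<lambda>n. support_fun (B n \<omega>) \<theta>) \<longlonglongrightarrow> \<phi> \<theta>"
      using happens[OF AE_conjI[OF AE_good conv[OF unit]]] by blast
    have "(\<lambda>n. support_fun (B n \<omega>) \<theta>) \<longlonglongrightarrow> support_fun A \<theta>"
      by (rule tendsto_support_fun_hausdorff[OF A(1) goodD(1)[OF \<omega>(1)] unit lim[OF \<omega>(1)]])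
    then show ?thesis using \<omega>(2) LIMSEQ_unique by blast
  qed
  moreover have "AE \<omega> in M. (\<lambda>n. hausdorff_distance (B n \<omega>) A) \<longlonglongrightarrow> 0"
    using AE_good by eventually_elim (rule lim)
  ultimately show ?thesis using A(1) by blast
qed

end
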